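(* For any instance of the data described in the context, $\hat{\mathcal R}_M\supseteq\hat{\mathcal A}_M$, where $\hat{\cdot}$ denotes projection onto the coordinates $(p^g,q^g)$.
   Context: Data: finite bus set $\mathcal B$, line set $\mathcal L$ (unordered pairs of distinct buses; variables indexed by ordered pairs $(i,j)$ with $\{i,j\}\in\mathcal L$ where stated), $\delta(i)$ the neighbors of $i$, generator set $\mathcal G\subseteq\mathcal B$, reals $G_{ij},B_{ij}$ (lines), $G_{ii},B_{ii}$ (buses), demands $p_i^d,q_i^d$, voltage bounds $0\le\underline V_i\le\overline V_i$, generator bounds $p_i^{\min}\le p_i^{\max}$, $q_i^{\min}\le q_i^{\max}$ ($i\in\mathcal G$). Variables $p_i^g,q_i^g$ for $i\in\mathcal G$, with $p_i^g=q_i^g=0$ for $i\notin\mathcal G$; "generator bounds" means $p_i^{\min}\le p_i^g\le p_i^{\max}$, $q_i^{\min}\le q_i^g\le q_i^{\max}$. McCormick envelope: for $x\in[\underline x,\overline x]$, $y\in[\underline y,\overline y]$, $M(w=xy)$ denotes $\max\{\underline yx+\underline xy-\underline x\underline y,\ \overline yx+\overline xy-\overline x\overline y\}\le w\le\min\{\underline yx+\overline xy-\overline x\underline y,\ \overline yx+\underline xy-\underline x\overline y\}$. $\mathcal R_M$: set of $(p^g,q^g,e,f,E,F,H)$ ($e_i,f_i,E_{ii},F_{ii}$ for buses; $E_{ij},F_{ij},H_{ij}$ for ordered line pairs) with $p_i^g-p_i^d=G_{ii}(E_{ii}+F_{ii})+\sum_{j\in\delta(i)}[G_{ij}(E_{ij}+F_{ij})-B_{ij}(H_{ij}-H_{ji})]$,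 $q_i^g-q_i^d=-B_{ii}(E_{ii}+F_{ii})+\sum_{j\in\delta(i)}[-B_{ij}(E_{ij}+F_{ij})-G_{ij}(H_{ij}-H_{ji})]$, $\underline V_i^2\le E_{ii}+F_{ii}\le\overline V_i^2$, $-\overline V_i\le e_i,f_i\le\overline V_i$, $M(E_{ij}=e_ie_j)$, $M(F_{ij}=f_if_j)$, $M(H_{ij}=e_if_j)$, $M(E_{ii}=e_i^2)$, $M(F_{ii}=f_i^2)$ (bounds $[-\overline V_i,\overline V_i]$ for $e_i,f_i$), $E_{ii},F_{ii}\ge0$, and generator bounds. $\mathcal A_M$: set of $(p^g,q^g,c,s,C,S,D)$ with $c_{ii}$ for buses, $c_{ij},s_{ij}$ for ordered line pairs, $C_{ij},S_{ij},D_{ij}$ per line, satisfying $p_i^g-p_i^d=G_{ii}c_{ii}+\sum_{j\in\delta(i)}(G_{ij}c_{ij}-B_{ij}s_{ij})$, $q_i^g-q_i^d=-B_{ii}c_{ii}+\sum_{j\in\delta(i)}(-B_{ij}c_{ij}-G_{ij}s_{ij})$, $\underline V_i^2\le c_{ii}\le\overline V_i^2$, $c_{ij}=c_{ji}$, $s_{ij}=-s_{ji}$, generator bounds, and per line $C_{ij}+S_{ij}=D_{ij}$, $-\overline V_i\overline V_j\le c_{ij},s_{ij}\le\overline V_i\overline V_j$, $M(C_{ij}=c_{ij}^2)$, $M(S_{ij}=s_{ij}^2)$ (bounds $[-\overline V_i\overline V_j,\overline V_i\overline V_j]$), $M(D_{ij}=c_{ii}c_{jj})$ (bounds $[\underline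 V_i^2,\overline V_i^2]$, $[\underline V_j^2,\overline V_j^2]$), $C_{ij},S_{ij}\ge0$. *)

theory Defs
  imports Complex_Main
begin

text \<open>Network data. Line quantities G_ij, B_ij are attached to unordered lines
  (two-element sets {i,j}); bus quantities G_ii, B_ii to buses.\<close>

record 'b pf_data =
  buses :: "'b set"
  lines :: "'b set set"
  gens  :: "'b set"
  Gline :: "'b set \<Rightarrow> real"
  Bline :: "'b set \<Rightarrow> real"
  Gbus  :: "'b \<Rightarrow> real"
  Bbus  :: "'b \<Rightarrow> real"
  pdem  :: "'b \<Rightarrow> real"
  qdem  :: "'b \<Rightarrow> real"
  Vlo   :: "'b \<Rightarrow> real"
  Vhi   :: "'b \<Rightarrow> real"
  pmin  :: "'b \<Rightarrow> real"
  pmax  :: "'b \<Rightarrow> real"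
  qmin  :: "'b \<Rightarrow> real"
  qmax  :: "'b \<Rightarrow> real"

definition wf_data :: "'b pf_data \<Rightarrow> bool" where
  "wf_data d \<longleftrightarrow> finite (buses d)
     \<and> (\<forall>l\<in>lines d. \<exists>i j. i \<in> buses d \<and> j \<in> buses d \<and> i \<noteq> j \<and> l = {i, j})
     \<and> gens d \<subseteq> buses d
     \<and> (\<forall>i\<in>buses d. 0 \<le> Vlo d i \<and> Vlo d i \<le> Vhi d i)
     \<and> (\<forall>i\<in>gens d. pmin d i \<le> pmax d i \<and> qmin d i \<le> qmax d i)"

definition nbr :: "'b pf_data \<Rightarrow> 'b \<Rightarrow> 'b set" where
  "nbr d i = {j. {i, j} \<in> lines d}"

definition mccormick :: "real \<Rightarrow> real \<Rightarrow> real \<Rightarrow> real \<Rightarrow> real \<Rightarrow> real \<Rightarrow> real \<Rightarrow> bool" where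
  "mccormick xl xu yl yu x y w \<longleftrightarrow>
     max (yl * x + xl * y - xl * yl) (yu * x + xu * y - xu * yu) \<le> w \<and>
     w \<le> min (yl * x + xu * y - xu * yl) (yu * x + xl * y - xl * yu)"

definition gen_ok :: "'b pf_data \<Rightarrow> ('b \<Rightarrow> real) \<Rightarrow> ('b \<Rightarrow> real) \<Rightarrow> bool" where
  "gen_ok d pg qg \<longleftrightarrow>
     (\<forall>i. i \<notin> gens d \<longrightarrow> pg i = 0 \<and> qg i = 0) \<and>
     (\<forall>i\<in>gens d. pmin d i \<le> pg i \<and> pg i \<le> pmax d i \<and> qmin d i \<le> qg i \<and> qg i \<le> qmax d i)"

text \<open>Rectangular McCormick relaxation R_M. The diagonal entries E i i, F i i are the
  bus variables E_ii, F_ii; E i j, F i j, H i j (i,j adjacent) are the line variables.\<close>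
definition RM :: "'b pf_data \<Rightarrow>
   (('b \<Rightarrow> real) \<times> ('b \<Rightarrow> real) \<times> ('b \<Rightarrow> real) \<times> ('b \<Rightarrow> real) \<times>
    ('b \<Rightarrow> 'b \<Rightarrow> real) \<times> ('b \<Rightarrow> 'b \<Rightarrow> real) \<times> ('b \<Rightarrow> 'b \<Rightarrow> real)) set" where
  "RM d = {(pg, qg, e, f, E, F, H).
     gen_ok d pg qg \<and>
     (\<forall>i\<in>buses d.
        pg i - pdem d i = Gbus d i * (E i i + F i i)
          + (\<Sum>j\<in>nbr d i. Gline d {i,j} * (E i j + F i j) - Bline d {i,j} * (H i j - H j i)) \<and>
        qg i - qdem d i = - Bbus d i * (E i i + F i i)
          + (\<Sum>j\<in>nbr d i. - Bline d {i,j} * (E i j + F i j) - Gline d {i,j} * (H i j - H j i)) \<and>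
        (Vlo d i)\<^sup>2 \<le> E i i + F i i \<and> E i i + F i i \<le> (Vhi d i)\<^sup>2 \<and>
        - Vhi d i \<le> e i \<and> e i \<le> Vhi d i \<and> - Vhi d i \<le> f i \<and> f i \<le> Vhi d i \<and>
        mccormick (- Vhi d i) (Vhi d i) (- Vhi d i) (Vhi d i) (e i) (e i) (E i i) \<and>
        mccormick (- Vhi d i) (Vhi d i) (- Vhi d i) (Vhi d i) (f i) (f i) (F i i) \<and>
        0 \<le> E i i \<and> 0 \<le> F i i) \<and>
     (\<forall>i j. {i, j} \<in> lines d \<and> i \<noteq> j \<longrightarrow>
        mccormick (- Vhi d i) (Vhi d i) (- Vhi d j) (Vhi d j) (e i) (e j) (E i j) \<and>
        mccormick (- Vhi d i) (Vhi d i) (- Vhi d j) (Vhi d j) (f i) (f j) (F i j) \<and>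
        mccormick (- Vhi d i) (Vhi d i) (- Vhi d j) (Vhi d j) (e i) (f j) (H i j))}"

text \<open>Angle-based McCormick relaxation A_M. The diagonal c i i is the bus variable c_ii;
  c i j, s i j (i,j adjacent) are ordered-pair line variables; C, S, D are indexed by the
  (unordered) line.\<close>
definition AM :: "'b pf_data \<Rightarrow>
   (('b \<Rightarrow> real) \<times> ('b \<Rightarrow> real) \<times> ('b \<Rightarrow> 'b \<Rightarrow> real) \<times> ('b \<Rightarrow> 'b \<Rightarrow> real) \<times>
    ('b set \<Rightarrow> real) \<times> ('b set \<Rightarrow> real) \<times> ('b set \<Rightarrow> real)) set" where
  "AM d = {(pg, qg, c, s, C, S, D).
     gen_ok d pg qg \<and>
     (\<forall>i\<in>buses d.
        pg i - pdem d i = Gbus d i * c i i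
          + (\<Sum>j\<in>nbr d i. Gline d {i,j} * c i j - Bline d {i,j} * s i j) \<and>
        qg i - qdem d i = - Bbus d i * c i i
          + (\<Sum>j\<in>nbr d i. - Bline d {i,j} * c i j - Gline d {i,j} * s i j) \<and>
        (Vlo d i)\<^sup>2 \<le> c i i \<and> c i i \<le> (Vhi d i)\<^sup>2) \<and>
     (\<forall>i j. {i, j} \<in> lines d \<and> i \<noteq> j \<longrightarrow>
        c i j = c j i \<and> s i j = - s j i \<and>
        C {i,j} + S {i,j} = D {i,j} \<and>
        - (Vhi d i * Vhi d j) \<le> c i j \<and> c i j \<le> Vhi d i * Vhi d j \<and>
        - (Vhi d i * Vhi d j) \<le> s i j \<and> s i j \<le> Vhi d i * Vhi d j \<and>
        mccormick (- (Vhi d i * Vhi d j)) (Vhi d i * Vhi d j) (- (Vhi d i * Vhi d j)) (Vhi d i * Vhi d j)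
                  (c i j) (c i j) (C {i,j}) \<and>
        mccormick (- (Vhi d i * Vhi d j)) (Vhi d i * Vhi d j) (- (Vhi d i * Vhi d j)) (Vhi d i * Vhi d j)
                  (s i j) (s i j) (S {i,j}) \<and>
        mccormick ((Vlo d i)\<^sup>2) ((Vhi d i)\<^sup>2) ((Vlo d j)\<^sup>2) ((Vhi d j)\<^sup>2) (c i i) (c j j) (D {i,j}) \<and>
        0 \<le> C {i,j} \<and> 0 \<le> S {i,j})}"

definition proj_pq :: "('p \<times> 'q \<times> 'r) \<Rightarrow> ('p \<times> 'q)" where
  "proj_pq x = (fst x, fst (snd x))"

end

theory Submission
  imports Defs
begin

text \<open>Given a point (pg, qg, c, s, C, S, D) of A_M, set the rectangular voltages e, f to zero and
  split the lifted variables evenly: E = F = c/2 and H = s/2. At e = f = 0 every McCormick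
  envelope of R_M degenerates to the box bound |w| \<le> product of the bounds, which the bounds on
  c and s in A_M provide; E + F = c reproduces the c-terms of the power balance, and the
  antisymmetry of s turns H i j - H j i into s i j.\<close>

lemma mccormick_at_origin_iff:
  "mccormick (- a) a (- b) b 0 0 w \<longleftrightarrow> \<bar>w\<bar> \<le> a * b"
  by (auto simp: mccormick_def)

lemma wf_data_loopless: "wf_data d \<Longrightarrow> {i} \<notin> lines d"
  unfolding wf_data_def by (metis doubleton_eq_iff insert_absorb2)

lemma wf_data_Vhi_nonneg: "wf_data d \<Longrightarrow> i \<in> buses d \<Longrightarrow> 0 \<le> Vhi d i"
  unfolding wf_data_def by force

lemma AM_split_in_RM:
  assumes loopless: "\<And>i. {i} \<notin> lines d"
    and Vhi_nonneg: "\<And>i. i \<in> buses d \<Longrightarrow> 0 \<le> Vhi d i"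
    and mem: "(pg, qg, c, s, C, S, D) \<in> AM d"
  shows "(pg, qg, \<lambda>_. 0, \<lambda>_. 0, \<lambda>i j. c i j / 2, \<lambda>i j. c i j / 2, \<lambda>i j. s i j / 2) \<in> RM d"
proof -
  have gen: "gen_ok d pg qg"
    and bus: "\<forall>i\<in>buses d.
        pg i - pdem d i = Gbus d i * c i i
          + (\<Sum>j\<in>nbr d i. Gline d {i,j} * c i j - Bline d {i,j} * s i j) \<and>
        qg i - qdem d i = - Bbus d i * c i i
          + (\<Sum>j\<in>nbr d i. - Bline d {i,j} * c i j - Gline d {i,j} * s i j) \<and>
        (Vlo d i)\<^sup>2 \<le> c i i \<and> c i i \<le> (Vhi d i)\<^sup>2"
    and line: "\<forall>i j. {i, j} \<in> lines d \<and> i \<noteq> j \<longrightarrow>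
        s i j = - s j i \<and>
        - (Vhi d i * Vhi d j) \<le> c i j \<and> c i j \<le> Vhi d i * Vhi d j \<and>
        - (Vhi d i * Vhi d j) \<le> s i j \<and> s i j \<le> Vhi d i * Vhi d j"
    using mem unfolding AM_def by (simp_all only: mem_Collect_eq case_prod_conv) blast+
  have H_diff: "s i j / 2 - s j i / 2 = s i j" if "j \<in> nbr d i" for i j
  proof -
    have "{i, j} \<in> lines d" "i \<noteq> j"
      using that loopless unfolding nbr_def by auto
    then show ?thesis using line by simp
  qed
  have bus_bounds: "0 \<le> c i i / 2" "\<bar>c i i / 2\<bar> \<le> Vhi d i * Vhi d i"
    if "i \<in> buses d" for i
  proof -
    have "(Vlo d i)\<^sup>2 \<le> c i i" "c i i \<le> (Vhi d i)\<^sup>2"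
      using bus that by blast+
    moreover have "0 \<le> (Vlo d i)\<^sup>2" by simp
    ultimately show "0 \<le> c i i / 2" "\<bar>c i i / 2\<bar> \<le> Vhi d i * Vhi d i"
      unfolding power2_eq_square[symmetric] by linarith+
  qed
  have line_bounds: "\<bar>c i j / 2\<bar> \<le> Vhi d i * Vhi d j" "\<bar>s i j / 2\<bar> \<le> Vhi d i * Vhi d j"
    if "{i, j} \<in> lines d" "i \<noteq> j" for i j
  proof -
    have "- (Vhi d i * Vhi d j) \<le> c i j" "c i j \<le> Vhi d i * Vhi d j"
      "- (Vhi d i * Vhi d j) \<le> s i j" "s i j \<le> Vhi d i * Vhi d j"
      using line that by blast+
    then show "\<bar>c i j / 2\<bar> \<le> Vhi d i * Vhi d j" "\<bar>s i j / 2\<bar> \<le> Vhi d i * Vhi d j"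
      by linarith+
  qed
  show ?thesis
    unfolding RM_def mem_Collect_eq case_prod_conv
    using gen bus bus_bounds line_bounds Vhi_nonneg
    by (auto simp: H_diff mccormick_at_origin_iff power2_eq_square cong: sum.cong)
qed

theorem proposition1:
  fixes d :: "'b pf_data"
  assumes "wf_data d"
  shows "proj_pq ` AM d \<subseteq> proj_pq ` RM d"
proof
  fix z assume "z \<in> proj_pq ` AM d"
  then obtain pg qg c s C S D where mem: "(pg, qg, c, s, C, S, D) \<in> AM d"
    and z: "z = (pg, qg)" by (auto simp: proj_pq_def)
  have "(pg, qg, \<lambda>_. 0, \<lambda>_. 0, \<lambda>i j. c i j / 2, \<lambda>i j. c i j / 2, \<lambda>i j. s i j / 2) \<in> RM d"
    using AM_split_in_RM[OF wf_data_loopless[OF assms] wf_data_Vhi_nonneg[OF assms] mem] .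
  then show "z \<in> proj_pq ` RM d"
    unfolding z proj_pq_def by force
qed

end
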